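(* Let $n$ be a positive integer, let $u:2^{[n]}\to\mathbb{R}_{\ge 0}$ be a normalized ($u(\emptyset)=0$), monotone, submodular set function, and let $c:2^{[n]}\to\mathbb{R}_{\ge 0}$ be given by $c(S)=\sum_{i\in S}c_i$ for positive costs $c_1,\dots,c_n>0$. Then any permutation of $[n]$ that orders the elements $i\in[n]$ in non-decreasing order of $c(\{i\})$ is an $n$-approximate solution to Min-Sum Submodular Cover on $(u,c)$; that is, its objective value is at most $n$ times the minimum objective value over all permutations of $[n]$.
   Context: $[n]=\{1,\dots,n\}$. Min-Sum Submodular Cover on $(u,c)$: find a permutation of $[n]$ minimizing $\sum_{i=1}^n c(S_i)\,(u(S_i)-u(S_{i-1}))$, where $S_i$ is the set of the first $i$ elements of the permutation and $S_0=\emptyset$. A set function $u$ is monotone if $u(S\cup\{i\})\ge u(S)$ and submodular if $u(S\cup\{i\})-u(S)\ge u(S\cup\{i,j\})-u(S\cup\{j\})$ for all $S\subseteq[n]$, $i,j\notin S$. *)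

theory Defs
  imports "HOL-Analysis.Analysis"
begin

text \<open>A permutation of [n] = {1..n} is represented as a bijection
  \<pi> : {1..n} \<rightarrow> {1..n}, where \<pi> k is the k-th element of the ordering.\<close>

definition is_perm :: "nat \<Rightarrow> (nat \<Rightarrow> nat) \<Rightarrow> bool" where
  "is_perm n \<pi> \<longleftrightarrow> bij_betw \<pi> {1..n} {1..n}"

definition prefix_set :: "(nat \<Rightarrow> nat) \<Rightarrow> nat \<Rightarrow> nat set" where
  "prefix_set \<pi> i = \<pi> ` {1..i}"

definition mssc_obj ::
  "nat \<Rightarrow> (nat set \<Rightarrow> real) \<Rightarrow> (nat set \<Rightarrow> real) \<Rightarrow> (nat \<Rightarrow> nat) \<Rightarrow> real" where
  "mssc_obj n u c \<pi> =
     (\<Sum>i=1..n. c (prefix_set \<pi> i) * (u (prefix_set \<pi> i) - u (prefix_set \<pi> (i - 1))))"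

definition monotone_sf :: "nat \<Rightarrow> (nat set \<Rightarrow> real) \<Rightarrow> bool" where
  "monotone_sf n u \<longleftrightarrow>
     (\<forall>S i. S \<subseteq> {1..n} \<longrightarrow> i \<in> {1..n} \<longrightarrow> u (insert i S) \<ge> u S)"

definition submodular_sf :: "nat \<Rightarrow> (nat set \<Rightarrow> real) \<Rightarrow> bool" where
  "submodular_sf n u \<longleftrightarrow>
     (\<forall>S i j. S \<subseteq> {1..n} \<longrightarrow> i \<in> {1..n} \<longrightarrow> j \<in> {1..n} \<longrightarrow> i \<notin> S \<longrightarrow> j \<notin> S \<longrightarrow>
        u (insert i S) - u S \<ge> u (insert i (insert j S)) - u (insert j S))"

end

theory Submission
  imports Defs
begin

(* Write a_m = c(pi m) and D_m for the marginal gain of u at step m of pi.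
   Since pi is sorted by cost, c(S_m) <= m a_m <= n a_m, so the objective of pi
   is at most n * sum_m a_m D_m.  Conversely, summation by parts writes the
   objective of any sigma as sum_e c_e R_e, where R_e is the utility still
   missing when sigma reaches e.  For every k, the element of pi(k..n) that
   sigma schedules first misses at least u([n]) - u(S_(k-1)) = sum_(m>=k) D_m;
   so the tails of (R_(pi m)) dominate those of (D_m), and weighting by the
   non-decreasing a_m gives sum_m a_m D_m <= obj(sigma). *)

lemma sum_weighted_ge_first_weight:
  fixes a z :: "nat \<Rightarrow> real"
  assumes "k \<le> n" and mono: "mono_on {k..n} a"
    and tails: "\<And>i. k < i \<Longrightarrow> i \<le> n \<Longrightarrow> 0 \<le> (\<Sum>m=i..n. z m)"
  shows "a k * (\<Sum>m=k..n. z m) \<le> (\<Sum>m=k..n. a m * z m)"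
  using \<open>k \<le> n\<close>
proof (induction k rule: inc_induct)
  case base
  then show ?case by simp
next
  case (step i)
  have "a i * (\<Sum>m=i..n. z m) = a i * z i + a i * (\<Sum>m=Suc i..n. z m)"
    using step.hyps by (simp add: sum.atLeast_Suc_atMost distrib_left)
  also have "\<dots> \<le> a i * z i + a (Suc i) * (\<Sum>m=Suc i..n. z m)"
    using step.hyps tails[of "Suc i"] mono_onD[OF mono, of i "Suc i"]
    by (auto intro!: mult_right_mono)
  also have "\<dots> \<le> a i * z i + (\<Sum>m=Suc i..n. a m * z m)"
    using step.IH by simp
  also have "\<dots> = (\<Sum>m=i..n. a m * z m)"
    using step.hyps by (simp add: sum.atLeast_Suc_atMost)
  finally show ?case .
qed

lemma sum_weighted_le_of_tails_le:
  fixes a x y :: "nat \<Rightarrow> real"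
  assumes "mono_on {1..n} a" and "\<And>m. m \<in> {1..n} \<Longrightarrow> 0 \<le> a m"
    and tails: "\<And>k. 1 \<le> k \<Longrightarrow> k \<le> n \<Longrightarrow> (\<Sum>m=k..n. y m) \<le> (\<Sum>m=k..n. x m)"
  shows "(\<Sum>m=1..n. a m * y m) \<le> (\<Sum>m=1..n. a m * x m)"
proof (cases "n = 0")
  case False
  have "0 \<le> a 1 * (\<Sum>m=1..n. x m - y m)"
    using assms(2)[of 1] tails[of 1] False by (simp add: sum_subtractf)
  also have "\<dots> \<le> (\<Sum>m=1..n. a m * (x m - y m))"
    using False assms(1) tails by (intro sum_weighted_ge_first_weight) (auto simp: sum_subtractf)
  finally show ?thesis
    by (simp add: sum_subtractf right_diff_distrib)
qed simp

lemma sum_partial_sums_times_diff: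
  fixes g f :: "nat \<Rightarrow> 'a::comm_ring"
  shows "(\<Sum>i=1..n. (\<Sum>j=1..i. g j) * (f i - f (i - 1))) = (\<Sum>j=1..n. g j * (f n - f (j - 1)))"
proof (induction n)
  case 0
  then show ?case by simp
next
  case (Suc n)
  have "(\<Sum>i=1..Suc n. (\<Sum>j=1..i. g j) * (f i - f (i - 1)))
      = (\<Sum>j=1..n. g j * (f n - f (j - 1))) + (\<Sum>j=1..Suc n. g j) * (f (Suc n) - f n)"
    using Suc by simp
  also have "\<dots> = (\<Sum>j=1..n. g j * (f n - f (j - 1)) + g j * (f (Suc n) - f n))
                  + g (Suc n) * (f (Suc n) - f n)"
    by (simp add: sum.distrib sum_distrib_right distrib_right)
  also have "\<dots> = (\<Sum>j=1..Suc n. g j * (f (Suc n) - f (j - 1)))"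
    by (simp add: algebra_simps)
  finally show ?case .
qed

lemma sum_diff_pred_telescope:
  fixes f :: "nat \<Rightarrow> 'a::ab_group_add"
  assumes "1 \<le> k" and "k \<le> Suc n"
  shows "(\<Sum>i=k..n. f i - f (i - 1)) = f n - f (k - 1)"
  using assms(2)
proof (induction n)
  case (Suc n)
  show ?case
  proof (cases "k = Suc (Suc n)")
    case False
    then show ?thesis
      using Suc assms(1) by simp
  qed simp
qed (use assms(1) in simp)

lemma monotone_sf_subset:
  assumes "monotone_sf n u" and "A \<subseteq> B" and "B \<subseteq> {1..n}"
  shows "u A \<le> u B"
proof -
  have "u A \<le> u (A \<union> D)" if "finite D" and "D \<subseteq> {1..n}" for D
    using that
  proof (induction D rule: finite_induct)
    case (insert x D)
    have "A \<union> D \<subseteq> {1..n}" and "x \<in> {1..n}"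
      using insert.prems assms(2,3) by blast+
    then have "u (A \<union> D) \<le> u (insert x (A \<union> D))"
      using assms(1) unfolding monotone_sf_def by blast
    then show ?case
      using insert by simp
  qed simp
  moreover have "finite (B - A)"
    by (rule finite_subset[OF _ finite_atLeastAtMost]) (use assms(3) in blast)
  moreover have "A \<union> (B - A) = B"
    using assms(2) by blast
  ultimately show ?thesis
    using assms(3) by (metis Diff_subset order_trans)
qed

lemma prefix_set_eq_insert:
  assumes "1 \<le> i"
  shows "prefix_set \<pi> i = insert (\<pi> i) (prefix_set \<pi> (i - 1))"
proof -
  have "{1..i} = insert i {1..i - 1}"
    using assms by auto
  then show ?thesis
    by (simp add: prefix_set_def)
qed

lemma is_perm_apply_mem: "is_perm n \<pi> \<Longrightarrow> i \<in> {1..n} \<Longrightarrow> \<pi> i \<in> {1..n}"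
  unfolding is_perm_def by (rule bij_betw_apply)

lemma is_perm_inv_into_mem: "is_perm n \<pi> \<Longrightarrow> e \<in> {1..n} \<Longrightarrow> inv_into {1..n} \<pi> e \<in> {1..n}"
  unfolding is_perm_def by (rule bij_betw_apply[OF bij_betw_inv_into])

lemma is_perm_inv_into_apply: "is_perm n \<pi> \<Longrightarrow> i \<in> {1..n} \<Longrightarrow> inv_into {1..n} \<pi> (\<pi> i) = i"
  unfolding is_perm_def by (rule bij_betw_inv_into_left)

lemma is_perm_prefix_set_subset:
  "is_perm n \<pi> \<Longrightarrow> i \<le> n \<Longrightarrow> prefix_set \<pi> i \<subseteq> {1..n}"
  by (auto simp: is_perm_def prefix_set_def bij_betw_def)

lemma is_perm_prefix_set_all:
  "is_perm n \<pi> \<Longrightarrow> prefix_set \<pi> n = {1..n}"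
  by (simp add: is_perm_def prefix_set_def bij_betw_def)

lemma is_perm_sum_prefix_set:
  assumes "is_perm n \<pi>" and "i \<le> n"
  shows "sum c (prefix_set \<pi> i) = (\<Sum>j=1..i. c (\<pi> j))"
proof -
  have "inj_on \<pi> {1..i}"
    using assms by (auto simp: is_perm_def bij_betw_def intro: inj_on_subset)
  then show ?thesis
    by (simp add: prefix_set_def sum.reindex)
qed

lemma is_perm_prefix_set_eq_diff:
  assumes "is_perm n \<pi>" and "k \<le> n"
  shows "prefix_set \<pi> k = {1..n} - \<pi> ` {Suc k..n}"
proof -
  have inj: "inj_on \<pi> {1..n}" and onto: "\<pi> ` {1..n} = {1..n}"
    using assms(1) by (auto simp: is_perm_def bij_betw_def)
  have "{1..k} = {1..n} - {Suc k..n}"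
    using assms(2) by auto
  then have "prefix_set \<pi> k = \<pi> ` ({1..n} - {Suc k..n})"
    unfolding prefix_set_def by (rule arg_cong)
  also have "\<dots> = \<pi> ` {1..n} - \<pi> ` {Suc k..n}"
    by (rule inj_on_image_set_diff[OF inj]) auto
  also have "\<dots> = {1..n} - \<pi> ` {Suc k..n}"
    by (simp only: onto)
  finally show ?thesis .
qed

definition marginal_gain :: "(nat set \<Rightarrow> real) \<Rightarrow> (nat \<Rightarrow> nat) \<Rightarrow> nat \<Rightarrow> real" where
  "marginal_gain u \<pi> i = u (prefix_set \<pi> i) - u (prefix_set \<pi> (i - 1))"

lemma marginal_gain_nonneg:
  assumes "monotone_sf n u" and "is_perm n \<pi>" and "i \<in> {1..n}"
  shows "0 \<le> marginal_gain u \<pi> i"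
proof -
  have "\<pi> i \<in> {1..n}"
    using assms(2,3) by (rule is_perm_apply_mem)
  moreover have "prefix_set \<pi> (i - 1) \<subseteq> {1..n}"
    using assms(3) by (intro is_perm_prefix_set_subset[OF assms(2)]) auto
  ultimately show ?thesis
    using assms(1,3) prefix_set_eq_insert[of i \<pi>]
    by (auto simp: marginal_gain_def monotone_sf_def)
qed

lemma sum_marginal_gain_tail:
  assumes "is_perm n \<pi>" and "1 \<le> k" and "k \<le> Suc n"
  shows "(\<Sum>m=k..n. marginal_gain u \<pi> m) = u {1..n} - u (prefix_set \<pi> (k - 1))"
  using sum_diff_pred_telescope[OF assms(2,3), of "\<lambda>i. u (prefix_set \<pi> i)"]
  by (simp add: marginal_gain_def is_perm_prefix_set_all[OF assms(1)])

definition remaining_utility :: "nat \<Rightarrow> (nat set \<Rightarrow> real) \<Rightarrow> (nat \<Rightarrow> nat) \<Rightarrow> nat \<Rightarrow> real" where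
  "remaining_utility n u \<sigma> e = u {1..n} - u (prefix_set \<sigma> (inv_into {1..n} \<sigma> e - 1))"

lemma remaining_utility_nonneg:
  assumes "monotone_sf n u" and "is_perm n \<sigma>" and "e \<in> {1..n}"
  shows "0 \<le> remaining_utility n u \<sigma> e"
proof -
  have "inv_into {1..n} \<sigma> e \<le> n"
    using is_perm_inv_into_mem[OF assms(2,3)] by simp
  then have "prefix_set \<sigma> (inv_into {1..n} \<sigma> e - 1) \<subseteq> {1..n}"
    using is_perm_prefix_set_subset[OF assms(2)] by simp
  then show ?thesis
    using monotone_sf_subset[OF assms(1)] by (simp add: remaining_utility_def)
qed

lemma mssc_obj_eq_sum_remaining_utility:
  assumes "is_perm n \<sigma>"
  shows "mssc_obj n u (\<lambda>S. \<Sum>i\<in>S. c i) \<sigma> = (\<Sum>e\<in>{1..n}. c e * remaining_utility n u \<sigma> e)"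
proof -
  have bij: "bij_betw \<sigma> {1..n} {1..n}"
    using assms by (simp add: is_perm_def)
  have "mssc_obj n u (\<lambda>S. \<Sum>i\<in>S. c i) \<sigma>
      = (\<Sum>i=1..n. (\<Sum>j=1..i. c (\<sigma> j)) * (u (prefix_set \<sigma> i) - u (prefix_set \<sigma> (i - 1))))"
    unfolding mssc_obj_def using assms by (intro sum.cong) (auto simp: is_perm_sum_prefix_set)
  also have "\<dots> = (\<Sum>j=1..n. c (\<sigma> j) * (u (prefix_set \<sigma> n) - u (prefix_set \<sigma> (j - 1))))"
    by (rule sum_partial_sums_times_diff)
  also have "\<dots> = (\<Sum>j=1..n. c (\<sigma> j) * remaining_utility n u \<sigma> (\<sigma> j))"
    using bij by (intro sum.cong)
      (auto simp: remaining_utility_def is_perm_prefix_set_all[OF assms] bij_betw_def)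
  also have "\<dots> = (\<Sum>e\<in>{1..n}. c e * remaining_utility n u \<sigma> e)"
    by (rule sum.reindex_bij_betw[OF bij])
  finally show ?thesis .
qed

lemma sum_remaining_utility_ge:
  assumes u: "monotone_sf n u" and \<sigma>: "is_perm n \<sigma>"
    and "A \<subseteq> {1..n}" and "A \<noteq> {}"
  shows "u {1..n} - u ({1..n} - A) \<le> (\<Sum>e\<in>A. remaining_utility n u \<sigma> e)"
proof -
  let ?pos = "inv_into {1..n} \<sigma>"
  obtain e0 where e0: "e0 \<in> A" and first: "\<And>e. e \<in> A \<Longrightarrow> ?pos e0 \<le> ?pos e"
    using ex_has_least_nat[of "\<lambda>e. e \<in> A" _ ?pos] \<open>A \<noteq> {}\<close> by blast
  have "prefix_set \<sigma> (?pos e0 - 1) \<subseteq> {1..n} - A"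
  proof
    fix x
    assume "x \<in> prefix_set \<sigma> (?pos e0 - 1)"
    then obtain j where j: "1 \<le> j" "j < ?pos e0" "x = \<sigma> j"
      by (auto simp: prefix_set_def)
    have "?pos e0 \<in> {1..n}"
      using e0 \<open>A \<subseteq> {1..n}\<close> is_perm_inv_into_mem[OF \<sigma>] by blast
    then have "j \<in> {1..n}"
      using j by simp
    then have "x \<in> {1..n}" and "?pos x = j"
      using j is_perm_apply_mem[OF \<sigma>] is_perm_inv_into_apply[OF \<sigma>] by simp_all
    then show "x \<in> {1..n} - A"
      using first[of x] j \<open>x \<in> {1..n}\<close> by auto
  qed
  then have "u {1..n} - u ({1..n} - A) \<le> remaining_utility n u \<sigma> e0"
    using monotone_sf_subset[OF u] by (simp add: remaining_utility_def)
  also have "\<dots> \<le> (\<Sum>e\<in>A. remaining_utility n u \<sigma> e)"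
    using e0 \<open>A \<subseteq> {1..n}\<close> remaining_utility_nonneg[OF u \<sigma>]
    by (intro member_le_sum) (auto intro: finite_subset)
  finally show ?thesis .
qed

lemma weighted_gains_sorted_le_mssc_obj:
  assumes u: "monotone_sf n u" and \<pi>: "is_perm n \<pi>" and \<sigma>: "is_perm n \<sigma>"
    and sorted: "mono_on {1..n} (\<lambda>m. c (\<pi> m))" and c_nonneg: "\<forall>i\<in>{1..n}. 0 \<le> c i"
  shows "(\<Sum>m=1..n. c (\<pi> m) * marginal_gain u \<pi> m) \<le> mssc_obj n u (\<lambda>S. \<Sum>i\<in>S. c i) \<sigma>"
proof -
  have bij: "bij_betw \<pi> {1..n} {1..n}"
    using \<pi> by (simp add: is_perm_def)
  have "(\<Sum>m=1..n. c (\<pi> m) * marginal_gain u \<pi> m)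
      \<le> (\<Sum>m=1..n. c (\<pi> m) * remaining_utility n u \<sigma> (\<pi> m))"
  proof (rule sum_weighted_le_of_tails_le[OF sorted])
    show "0 \<le> c (\<pi> m)" if "m \<in> {1..n}" for m
      using that c_nonneg is_perm_apply_mem[OF \<pi>] by blast
  next
    fix k
    assume k: "1 \<le> k" "k \<le> n"
    have "inj_on \<pi> {k..n}"
      using bij k by (auto simp: bij_betw_def intro: inj_on_subset)
    moreover have "\<pi> ` {k..n} \<subseteq> {1..n}"
      using bij k by (auto simp: bij_betw_def)
    moreover have "prefix_set \<pi> (k - 1) = {1..n} - \<pi> ` {k..n}"
      using is_perm_prefix_set_eq_diff[OF \<pi>, of "k - 1"] k by simp
    ultimately show "(\<Sum>m=k..n. marginal_gain u \<pi> m) \<le> (\<Sum>m=k..n. remaining_utility n u \<sigma> (\<pi> m))"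
      using sum_remaining_utility_ge[OF u \<sigma>, of "\<pi> ` {k..n}"] k
      by (simp add: sum_marginal_gain_tail[OF \<pi>] sum.reindex)
  qed
  also have "\<dots> = (\<Sum>e\<in>{1..n}. c e * remaining_utility n u \<sigma> e)"
    by (rule sum.reindex_bij_betw[OF bij])
  also have "\<dots> = mssc_obj n u (\<lambda>S. \<Sum>i\<in>S. c i) \<sigma>"
    by (rule mssc_obj_eq_sum_remaining_utility[OF \<sigma>, symmetric])
  finally show ?thesis .
qed

lemma mssc_obj_sorted_le_weighted_gains:
  assumes u: "monotone_sf n u" and \<pi>: "is_perm n \<pi>"
    and sorted: "mono_on {1..n} (\<lambda>m. c (\<pi> m))" and c_nonneg: "\<forall>i\<in>{1..n}. 0 \<le> c i"
  shows "mssc_obj n u (\<lambda>S. \<Sum>i\<in>S. c i) \<pi> \<le> real n * (\<Sum>m=1..n. c (\<pi> m) * marginal_gain u \<pi> m)"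
proof -
  have "sum c (prefix_set \<pi> i) \<le> real n * c (\<pi> i)" if i: "i \<in> {1..n}" for i
  proof -
    have "sum c (prefix_set \<pi> i) = (\<Sum>j=1..i. c (\<pi> j))"
      using \<pi> i by (simp add: is_perm_sum_prefix_set)
    also have "\<dots> \<le> (\<Sum>j=1..i. c (\<pi> i))"
      using i by (intro sum_mono mono_onD[OF sorted]) auto
    also have "\<dots> \<le> real n * c (\<pi> i)"
      using i \<pi> c_nonneg by (auto simp: is_perm_def bij_betw_def intro!: mult_right_mono)
    finally show ?thesis .
  qed
  then have "mssc_obj n u (\<lambda>S. \<Sum>i\<in>S. c i) \<pi> \<le> (\<Sum>m=1..n. real n * c (\<pi> m) * marginal_gain u \<pi> m)"
    unfolding mssc_obj_def marginal_gain_def[symmetric]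
    using marginal_gain_nonneg[OF u \<pi>] by (intro sum_mono mult_right_mono) auto
  then show ?thesis
    by (simp add: sum_distrib_left mult.assoc)
qed

theorem theorem3:
  fixes n :: nat and u :: "nat set \<Rightarrow> real" and cs :: "nat \<Rightarrow> real"
    and \<pi> :: "nat \<Rightarrow> nat"
  assumes n_pos: "n \<ge> 1"
    and u_nonneg: "\<forall>S. S \<subseteq> {1..n} \<longrightarrow> u S \<ge> 0"
    and u_norm: "u {} = 0"
    and u_mono: "monotone_sf n u"
    and u_sub: "submodular_sf n u"
    and cs_pos: "\<forall>i\<in>{1..n}. cs i > 0"
    and perm: "is_perm n \<pi>"
    and sorted: "\<forall>k l. 1 \<le> k \<longrightarrow> k \<le> l \<longrightarrow> l \<le> n \<longrightarrow> sum cs {\<pi> k} \<le> sum cs {\<pi> l}"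
  shows "\<forall>\<sigma>. is_perm n \<sigma> \<longrightarrow>
           mssc_obj n u (\<lambda>S. \<Sum>i\<in>S. cs i) \<pi> \<le> real n * mssc_obj n u (\<lambda>S. \<Sum>i\<in>S. cs i) \<sigma>"
proof (intro allI impI)
  fix \<sigma>
  assume \<sigma>: "is_perm n \<sigma>"
  have cs_nonneg: "\<forall>i\<in>{1..n}. 0 \<le> cs i"
    using cs_pos by (simp add: less_imp_le)
  have sorted_on: "mono_on {1..n} (\<lambda>m. cs (\<pi> m))"
    using sorted by (intro mono_onI) auto
  have "mssc_obj n u (\<lambda>S. \<Sum>i\<in>S. cs i) \<pi> \<le> real n * (\<Sum>m=1..n. cs (\<pi> m) * marginal_gain u \<pi> m)"
    by (rule mssc_obj_sorted_le_weighted_gains[OF u_mono perm sorted_on cs_nonneg])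
  also have "\<dots> \<le> real n * mssc_obj n u (\<lambda>S. \<Sum>i\<in>S. cs i) \<sigma>"
    by (intro mult_left_mono weighted_gains_sorted_le_mssc_obj[OF u_mono perm \<sigma> sorted_on cs_nonneg])
      simp
  finally show "mssc_obj n u (\<lambda>S. \<Sum>i\<in>S. cs i) \<pi> \<le> real n * mssc_obj n u (\<lambda>S. \<Sum>i\<in>S. cs i) \<sigma>" .
qed

end
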